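(* Let $M,K$ be real anti-symmetric $m\times m$ matrices, $S:\mathbb R^m\to\mathbb R$ smooth, $A$ real symmetric and $B$ real anti-symmetric $m\times m$ matrices, and let $\mathbf z_h$ be a solution of the semi-discrete DG scheme described in the context. Let $E(\mathbf z)=S(\mathbf z)-\frac12K\mathbf z_x\cdot\mathbf z$ and $$\mathcal E_{h,j}=\int_{I_j}E(\mathbf z_h)\,dx-\Big(\tfrac12\widehat{K\mathbf z_h}\cdot\mathbf z_h^-+\tfrac14 B\,\partial_t[\mathbf z_h]\cdot[\mathbf z_h]\Big)_{j+\frac12}+\Big(\tfrac12\widehat{K\mathbf z_h}\cdot\mathbf z_h^+-\tfrac14B\,\partial_t[\mathbf z_h]\cdot[\mathbf z_h]\Big)_{j-\frac12}.$$ Then for every $j$, $$\frac{d}{dt}\mathcal E_{h,j}+\tfrac12\mathcal F(\mathbf z_h,\partial_t\mathbf z_h)_{j+\frac12}-\tfrac12\mathcal F(\mathbf z_h,\partial_t\mathbf z_h)_{j-\frac12}=0,$$ where at each interface $\mathcal F(\mathbf z,\breve{\mathbf z})=\{K\mathbf z\cdot\breve{\mathbf z}\}-\widehat{K\mathbf z}\cdot\{\breve{\mathbf z}\}+\widehat{K\breve{\mathbf z}}\cdot\{\mathbf z\}$ with $\widehat{K\mathbf z}=K\{\mathbf z\}+A[\mathbf z]+B\,\partial_t[\mathbf z]$. Consequently the total energy $$\mathcal E_h=\int_\Omega E(\mathbf z_h)\,dx+\tfrac12\sum_j\Big(\big(K\{\mathbf z_h\}+A[\mathbf z_h]\big)\cdot[\mathbf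 z_h]\Big)_{j+\frac12}$$ is constant in time.
   Context: Mesh and spaces: a one-dimensional domain $\Omega$ is partitioned into cells $I_j=[x_{j-1/2},x_{j+1/2}]$, $j=1,\dots,N$, with periodic boundary conditions (interface indices taken modulo $N$). For fixed $k\ge 0$, $V_h=\{v\in L^2(\Omega): v|_{I_j}\text{ is a polynomial of degree}\le k\ \forall j\}$ and $\mathbf V_h=(V_h)^m$. For $\mathbf v\in\mathbf V_h$, $\mathbf v^\pm_{j+1/2}$ are its right/left limits at $x_{j+1/2}$; $\{\mathbf v\}=\frac12(\mathbf v^++\mathbf v^-)$, $[\mathbf v]=\mathbf v^+-\mathbf v^-$, $\{K\mathbf v\cdot\mathbf w\}=\frac12(K\mathbf v^+\cdot\mathbf w^++K\mathbf v^-\cdot\mathbf w^-)$; subscript $j\pm\frac12$ means evaluation at $x_{j\pm1/2}$; $\mathbf z_x$ is taken cellwise. The semi-discrete DG scheme: find $\mathbf z_h(t)\in\mathbf V_h$, continuously differentiable in $t$, such that for all $j$ and all $\boldsymbol\varphi\in\mathbf V_h$, $$\int_{I_j}M\partial_t\mathbf z_h\cdot\boldsymbol\varphi\,dx-\int_{I_j}K\mathbf z_h\cdot\partial_x\boldsymbol\varphi\,dx+\big(\widehat{K\mathbf z_h}\cdot\boldsymbol\varphi^-\big)_{j+\frac12}-\big(\widehat{K\mathbf z_h}\cdot\boldsymbol\varphi^+\big)_{j-\frac12}=\int_{I_j}\nabla_{\mathbf z}S(\mathbf z_h)\cdot\boldsymbol\varphi\,dx,$$ with $\widehat{K\mathbf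 z_h}=K\{\mathbf z_h\}+A[\mathbf z_h]+B\,\partial_t[\mathbf z_h]$ at each interface. (This discretizes $M\mathbf z_t+K\mathbf z_x=\nabla_{\mathbf z}S(\mathbf z)$.) *)

theory Defs
  imports "HOL-Analysis.Analysis"
begin

text \<open>
The mesh has N cells; cell j (j = 0..N-1) is the interval
[p j, p (j+1)].  Interface i (i = 0..N-1, taken modulo N) is the left
endpoint p i of cell i; its left neighbour is cell (i-1) mod N, evaluated
at its right endpoint (for i = 0 this is cell N-1 at p N, periodicity).
Thus x_(j+1/2) of the paper (right end of cell j) is interface j+1 (mod N)
and x_(j-1/2) (left end of cell j) is interface j.

A function of V_h (vector valued, values in real^'m) is stored cellwise
by its polynomial coefficients: a :: nat => nat => real^'m, the restriction
to cell j being x |-> sum_{i<=k} x^i a j i.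
\<close>

definition pv :: "nat \<Rightarrow> (nat \<Rightarrow> real^'m) \<Rightarrow> real \<Rightarrow> real^'m" where
  "pv k a x = (\<Sum>i\<le>k. (x ^ i) *\<^sub>R a i)"

definition pvd :: "nat \<Rightarrow> (nat \<Rightarrow> real^'m) \<Rightarrow> real \<Rightarrow> real^'m" where
  "pvd k a x = (\<Sum>i\<le>k. (real i * x ^ (i - 1)) *\<^sub>R a i)"

definition cellf :: "nat \<Rightarrow> (nat \<Rightarrow> nat \<Rightarrow> real^'m) \<Rightarrow> nat \<Rightarrow> real \<Rightarrow> real^'m" where
  "cellf k a = (\<lambda>j x. pv k (a j) x)"

definition cellfx :: "nat \<Rightarrow> (nat \<Rightarrow> nat \<Rightarrow> real^'m) \<Rightarrow> nat \<Rightarrow> real \<Rightarrow> real^'m" where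
  "cellfx k a = (\<lambda>j x. pvd k (a j) x)"

definition tr_minus :: "nat \<Rightarrow> (nat \<Rightarrow> real) \<Rightarrow> (nat \<Rightarrow> real \<Rightarrow> real^'m) \<Rightarrow> nat \<Rightarrow> real^'m" where
  "tr_minus N p u i = (let l = (i mod N + N - 1) mod N in u l (p (Suc l)))"

definition tr_plus :: "nat \<Rightarrow> (nat \<Rightarrow> real) \<Rightarrow> (nat \<Rightarrow> real \<Rightarrow> real^'m) \<Rightarrow> nat \<Rightarrow> real^'m" where
  "tr_plus N p u i = u (i mod N) (p (i mod N))"

definition avg :: "nat \<Rightarrow> (nat \<Rightarrow> real) \<Rightarrow> (nat \<Rightarrow> real \<Rightarrow> real^'m) \<Rightarrow> nat \<Rightarrow> real^'m" where
  "avg N p u i = (1/2) *\<^sub>R (tr_plus N p u i + tr_minus N p u i)"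

definition jump :: "nat \<Rightarrow> (nat \<Rightarrow> real) \<Rightarrow> (nat \<Rightarrow> real \<Rightarrow> real^'m) \<Rightarrow> nat \<Rightarrow> real^'m" where
  "jump N p u i = tr_plus N p u i - tr_minus N p u i"

definition avgK :: "nat \<Rightarrow> (nat \<Rightarrow> real) \<Rightarrow> real^'m^'m \<Rightarrow> (nat \<Rightarrow> real \<Rightarrow> real^'m)
    \<Rightarrow> (nat \<Rightarrow> real \<Rightarrow> real^'m) \<Rightarrow> nat \<Rightarrow> real" where
  "avgK N p K v w i = (1/2) * ((K *v tr_plus N p v i) \<bullet> tr_plus N p w i
                             + (K *v tr_minus N p v i) \<bullet> tr_minus N p w i)"

definition flux :: "nat \<Rightarrow> (nat \<Rightarrow> real) \<Rightarrow> real^'m^'m \<Rightarrow> real^'m^'m \<Rightarrow> real^'m^'m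
    \<Rightarrow> (nat \<Rightarrow> real \<Rightarrow> real^'m) \<Rightarrow> (nat \<Rightarrow> real \<Rightarrow> real^'m) \<Rightarrow> nat \<Rightarrow> real^'m" where
  "flux N p K A B v vt i = K *v avg N p v i + A *v jump N p v i + B *v jump N p vt i"

text \<open>the semi-discrete DG scheme at a time instant, with z_h given by coefficients a
  and its time derivative by coefficients a'; test functions range over all of V_h\<close>
definition dg_scheme :: "nat \<Rightarrow> (nat \<Rightarrow> real) \<Rightarrow> nat \<Rightarrow> real^'m^'m \<Rightarrow> real^'m^'m
    \<Rightarrow> real^'m^'m \<Rightarrow> real^'m^'m \<Rightarrow> (real^'m \<Rightarrow> real^'m)
    \<Rightarrow> (nat \<Rightarrow> nat \<Rightarrow> real^'m) \<Rightarrow> (nat \<Rightarrow> nat \<Rightarrow> real^'m) \<Rightarrow> bool" where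
  "dg_scheme N p k M K A B gradS a a' \<longleftrightarrow>
     (\<forall>j<N. \<forall>b :: nat \<Rightarrow> nat \<Rightarrow> real^'m.
        integral {p j..p (Suc j)} (\<lambda>x. (M *v cellf k a' j x) \<bullet> cellf k b j x)
      - integral {p j..p (Suc j)} (\<lambda>x. (K *v cellf k a j x) \<bullet> cellfx k b j x)
      + flux N p K A B (cellf k a) (cellf k a') (Suc j) \<bullet> tr_minus N p (cellf k b) (Suc j)
      - flux N p K A B (cellf k a) (cellf k a') j \<bullet> tr_plus N p (cellf k b) j
      = integral {p j..p (Suc j)} (\<lambda>x. gradS (cellf k a j x) \<bullet> cellf k b j x))"

definition cell_energy :: "nat \<Rightarrow> (nat \<Rightarrow> real) \<Rightarrow> real^'m^'m \<Rightarrow> (real^'m \<Rightarrow> real)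
    \<Rightarrow> (nat \<Rightarrow> nat \<Rightarrow> real^'m) \<Rightarrow> nat \<Rightarrow> real" where
  "cell_energy k p K S a j =
     integral {p j..p (Suc j)} (\<lambda>x. S (cellf k a j x) - (1/2) * ((K *v cellfx k a j x) \<bullet> cellf k a j x))"

definition local_energy :: "nat \<Rightarrow> (nat \<Rightarrow> real) \<Rightarrow> nat \<Rightarrow> real^'m^'m \<Rightarrow> real^'m^'m
    \<Rightarrow> real^'m^'m \<Rightarrow> (real^'m \<Rightarrow> real)
    \<Rightarrow> (nat \<Rightarrow> nat \<Rightarrow> real^'m) \<Rightarrow> (nat \<Rightarrow> nat \<Rightarrow> real^'m) \<Rightarrow> nat \<Rightarrow> real" where
  "local_energy N p k K A B S a a' j =
     cell_energy k p K S a j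
   - ((1/2) * (flux N p K A B (cellf k a) (cellf k a') (Suc j) \<bullet> tr_minus N p (cellf k a) (Suc j))
      + (1/4) * ((B *v jump N p (cellf k a') (Suc j)) \<bullet> jump N p (cellf k a) (Suc j)))
   + ((1/2) * (flux N p K A B (cellf k a) (cellf k a') j \<bullet> tr_plus N p (cellf k a) j)
      - (1/4) * ((B *v jump N p (cellf k a') j) \<bullet> jump N p (cellf k a) j))"

text \<open>interface quantity F(z, z_t) at interface i; a'' are the coefficients of the
  second time derivative (needed for the hat of z_t, which contains B d/dt [z_t])\<close>
definition Fint :: "nat \<Rightarrow> (nat \<Rightarrow> real) \<Rightarrow> nat \<Rightarrow> real^'m^'m \<Rightarrow> real^'m^'m \<Rightarrow> real^'m^'m
    \<Rightarrow> (nat \<Rightarrow> nat \<Rightarrow> real^'m) \<Rightarrow> (nat \<Rightarrow> nat \<Rightarrow> real^'m) \<Rightarrow> (nat \<Rightarrow> nat \<Rightarrow> real^'m)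
    \<Rightarrow> nat \<Rightarrow> real" where
  "Fint N p k K A B a a' a'' i =
     avgK N p K (cellf k a) (cellf k a') i
   - flux N p K A B (cellf k a) (cellf k a') i \<bullet> avg N p (cellf k a') i
   + flux N p K A B (cellf k a') (cellf k a'') i \<bullet> avg N p (cellf k a) i"

text \<open>total energy E_h (sum over interfaces j+1/2, j=1..N, i.e. all interfaces)\<close>
definition total_energy :: "nat \<Rightarrow> (nat \<Rightarrow> real) \<Rightarrow> nat \<Rightarrow> real^'m^'m \<Rightarrow> real^'m^'m
    \<Rightarrow> (real^'m \<Rightarrow> real) \<Rightarrow> (nat \<Rightarrow> nat \<Rightarrow> real^'m) \<Rightarrow> real" where
  "total_energy N p k K A S a =
     (\<Sum>j<N. cell_energy k p K S a j)
   + (1/2) * (\<Sum>i<N. (K *v avg N p (cellf k a) i + A *v jump N p (cellf k a) i)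
                        \<bullet> jump N p (cellf k a) i)"

end

theory Submission
  imports Defs
begin

text \<open>
Testing the scheme on the cell I_j with the time derivative of the solution as test function kills
the mass term (M is skew), and integrating K z_h . (z_h)_xt by parts (K is skew) then expresses the
time derivative of the cell integral of E(z_h) through interface values alone: at each end of the
cell, the numerical flux times the trace of the time derivative, minus half of K z_h . (z_h)_t.
The interface corrections in E_{h,j} are designed so that, at every interface, the contributions
of the two adjacent cells become -F/2 and +F/2; this is linear algebra resting on the identity
K z^+ . w^+ - K z^- . w^- = K{z} . [w] - K{w} . [z] for skew K, on the symmetry of A and on
B[w] . [w] = 0.  Summing over the periodic mesh, the cell contributions cancel exactly against the
time derivative of the interface energy, so the total energy is stationary.
\<close>

lemma skew_inner_commute:
  fixes K :: "real^'m^'m"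
  assumes "transpose K = - K"
  shows "(K *v x) \<bullet> y = - ((K *v y) \<bullet> x)"
proof -
  have "(K *v x) \<bullet> y = (transpose K *v y) \<bullet> x"
    by (metis dot_lmul_matrix inner_commute vector_transpose_matrix)
  also have "transpose K *v y = - (K *v y)"
    using assms by (simp add: matrix_vector_mult_def sum_negf vec_eq_iff)
  finally show ?thesis by simp
qed

lemma skew_inner_self:
  fixes K :: "real^'m^'m"
  assumes "transpose K = - K"
  shows "(K *v x) \<bullet> x = 0"
  using skew_inner_commute[OF assms, of x x] by simp

lemma symmetric_inner_commute:
  fixes A :: "real^'m^'m"
  assumes "transpose A = A"
  shows "(A *v x) \<bullet> y = (A *v y) \<bullet> x"
  by (metis assms dot_lmul_matrix inner_commute vector_transpose_matrix)

lemma continuous_on_matrix_vector_mult [continuous_intros]: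
  "continuous_on X f \<Longrightarrow> continuous_on X (\<lambda>x. (K :: real^'m^'m) *v f x)"
  by (rule continuous_on_compose2[OF matrix_vector_mult_linear_continuous_on[of UNIV]]) auto

lemma has_vector_derivative_matrix_vector_mult:
  assumes "(f has_vector_derivative f') F"
  shows "((\<lambda>s. (K :: real^'m^'m) *v f s) has_vector_derivative K *v f') F"
proof -
  have "bounded_linear (\<lambda>x. K *v x)"
    by (simp add: linear_conv_bounded_linear)
  then show ?thesis
    by (rule bounded_linear.has_vector_derivative[OF _ assms])
qed

lemma has_real_derivative_inner:
  assumes "(f has_vector_derivative f') (at t within U)" "(g has_vector_derivative g') (at t within U)"
  shows "((\<lambda>s. f s \<bullet> g s) has_real_derivative (f t \<bullet> g' + f' \<bullet> g t)) (at t within U)"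
  using bounded_bilinear.has_vector_derivative[OF bounded_bilinear_inner assms]
  by (simp add: has_real_derivative_iff_has_vector_derivative)

lemma pv_has_vector_derivative: "(pv k a has_vector_derivative pvd k a x) (at x within U)"
proof -
  have "((\<lambda>x. x ^ i *\<^sub>R a i) has_vector_derivative (real i * x ^ (i - 1)) *\<^sub>R a i) (at x within U)" for i
    using has_vector_derivative_scaleR[OF DERIV_pow has_vector_derivative_const[of "a i"]] by simp
  then show ?thesis
    unfolding pv_def pvd_def by (intro has_vector_derivative_sum)
qed

lemma pv_coeffs_has_vector_derivative:
  assumes "\<And>i. ((\<lambda>s. u s i) has_vector_derivative u' i) F"
  shows "((\<lambda>s. pv k (u s) x) has_vector_derivative pv k u' x) F"
  unfolding pv_def
  by (intro has_vector_derivative_sum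
      bounded_linear.has_vector_derivative[OF bounded_linear_scaleR_right] assms)

lemma pvd_coeffs_has_vector_derivative:
  assumes "\<And>i. ((\<lambda>s. u s i) has_vector_derivative u' i) F"
  shows "((\<lambda>s. pvd k (u s) x) has_vector_derivative pvd k u' x) F"
  unfolding pvd_def
  by (intro has_vector_derivative_sum
      bounded_linear.has_vector_derivative[OF bounded_linear_scaleR_right] assms)

lemma continuous_on_pv [continuous_intros]: "continuous_on X (pv k u)"
  unfolding pv_def by (intro continuous_intros)

lemma continuous_on_pvd [continuous_intros]: "continuous_on X (pvd k u)"
  unfolding pvd_def by (intro continuous_intros)

lemma continuous_on_pv_coeffs [continuous_intros]:
  assumes "\<And>i. continuous_on U (\<lambda>s. u s i)"
  shows "continuous_on (U \<times> V) (\<lambda>y. pv k (u (fst y)) (snd y))"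
  unfolding pv_def
  by (intro continuous_intros continuous_on_compose2[OF assms continuous_on_fst]) auto

lemma continuous_on_pvd_coeffs [continuous_intros]:
  assumes "\<And>i. continuous_on U (\<lambda>s. u s i)"
  shows "continuous_on (U \<times> V) (\<lambda>y. pvd k (u (fst y)) (snd y))"
  unfolding pvd_def
  by (intro continuous_intros continuous_on_compose2[OF assms continuous_on_fst]) auto

lemma tr_minus_Suc:
  assumes "j < N"
  shows "tr_minus N p u (Suc j) = u j (p (Suc j))"
proof -
  have "(Suc j mod N + N - 1) mod N = j"
  proof (cases "Suc j = N")
    case False
    with assms have "Suc j mod N + N - 1 = j + N" by simp
    then show ?thesis using assms by simp
  qed simp
  then show ?thesis by (simp add: tr_minus_def)
qed

lemma tr_plus_less: "j < N \<Longrightarrow> tr_plus N p u j = u j (p j)"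
  by (simp add: tr_plus_def)

lemma tr_minus_cellf_has_vector_derivative:
  assumes "\<And>j i. ((\<lambda>s. u s j i) has_vector_derivative u' j i) F"
  shows "((\<lambda>s. tr_minus N p (cellf k (u s)) l) has_vector_derivative tr_minus N p (cellf k u') l) F"
  unfolding tr_minus_def cellf_def Let_def by (intro pv_coeffs_has_vector_derivative assms)

lemma tr_plus_cellf_has_vector_derivative:
  assumes "\<And>j i. ((\<lambda>s. u s j i) has_vector_derivative u' j i) F"
  shows "((\<lambda>s. tr_plus N p (cellf k (u s)) l) has_vector_derivative tr_plus N p (cellf k u') l) F"
  unfolding tr_plus_def cellf_def by (intro pv_coeffs_has_vector_derivative assms)

lemma jump_cellf_has_vector_derivative:
  assumes "\<And>j i. ((\<lambda>s. u s j i) has_vector_derivative u' j i) F"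
  shows "((\<lambda>s. jump N p (cellf k (u s)) l) has_vector_derivative jump N p (cellf k u') l) F"
  unfolding jump_def
  by (intro has_vector_derivative_diff tr_minus_cellf_has_vector_derivative
      tr_plus_cellf_has_vector_derivative assms)

lemma avg_cellf_has_vector_derivative:
  assumes "\<And>j i. ((\<lambda>s. u s j i) has_vector_derivative u' j i) F"
  shows "((\<lambda>s. avg N p (cellf k (u s)) l) has_vector_derivative avg N p (cellf k u') l) F"
  unfolding avg_def
  by (intro bounded_linear.has_vector_derivative[OF bounded_linear_scaleR_right]
      has_vector_derivative_add tr_minus_cellf_has_vector_derivative
      tr_plus_cellf_has_vector_derivative assms)

lemma flux_cellf_has_vector_derivative:
  assumes "\<And>j i. ((\<lambda>s. u s j i) has_vector_derivative u' j i) F"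
    and "\<And>j i. ((\<lambda>s. v s j i) has_vector_derivative v' j i) F"
  shows "((\<lambda>s. flux N p K A B (cellf k (u s)) (cellf k (v s)) l) has_vector_derivative
      flux N p K A B (cellf k u') (cellf k v') l) F"
  unfolding flux_def
  by (intro has_vector_derivative_add has_vector_derivative_matrix_vector_mult
      avg_cellf_has_vector_derivative jump_cellf_has_vector_derivative assms)

lemma skew_trace_products:
  fixes K :: "real^'m^'m"
  assumes "transpose K = - K"
  shows "(K *v tr_plus N p z i) \<bullet> tr_plus N p w i - (K *v tr_minus N p z i) \<bullet> tr_minus N p w i
    = (K *v avg N p z i) \<bullet> jump N p w i - (K *v avg N p w i) \<bullet> jump N p z i"
  using skew_inner_commute[OF assms, of "tr_plus N p w i"]
    skew_inner_commute[OF assms, of "tr_minus N p w i"]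
  by (simp add: avg_def jump_def matrix_vector_right_distrib matrix_vector_mult_diff_distrib
      inner_add_left inner_diff_left inner_add_right inner_diff_right algebra_simps)

lemma flux_inner_jump:
  fixes B :: "real^'m^'m"
  assumes "transpose B = - B"
  shows "flux N p K A B z w i \<bullet> jump N p w i = (K *v avg N p z i + A *v jump N p z i) \<bullet> jump N p w i"
  by (simp add: flux_def inner_add_left skew_inner_self[OF assms])

definition boundary_term_minus :: "nat \<Rightarrow> (nat \<Rightarrow> real) \<Rightarrow> real^'m^'m \<Rightarrow> real^'m^'m \<Rightarrow> real^'m^'m
    \<Rightarrow> (nat \<Rightarrow> real \<Rightarrow> real^'m) \<Rightarrow> (nat \<Rightarrow> real \<Rightarrow> real^'m) \<Rightarrow> nat \<Rightarrow> real" where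
  "boundary_term_minus N p K A B z w i =
     flux N p K A B z w i \<bullet> tr_minus N p w i - 1/2 * ((K *v tr_minus N p z i) \<bullet> tr_minus N p w i)"

definition boundary_term_plus :: "nat \<Rightarrow> (nat \<Rightarrow> real) \<Rightarrow> real^'m^'m \<Rightarrow> real^'m^'m \<Rightarrow> real^'m^'m
    \<Rightarrow> (nat \<Rightarrow> real \<Rightarrow> real^'m) \<Rightarrow> (nat \<Rightarrow> real \<Rightarrow> real^'m) \<Rightarrow> nat \<Rightarrow> real" where
  "boundary_term_plus N p K A B z w i =
     flux N p K A B z w i \<bullet> tr_plus N p w i - 1/2 * ((K *v tr_plus N p z i) \<bullet> tr_plus N p w i)"

lemma boundary_term_minus_periodic:
  "boundary_term_minus N p K A B z w N = boundary_term_minus N p K A B z w 0"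
  by (simp add: boundary_term_minus_def flux_def avg_def jump_def tr_minus_def tr_plus_def)

lemma boundary_term_minus_diff_plus:
  fixes K A B :: "real^'m^'m"
  assumes K: "transpose K = - K" and A: "transpose A = A" and B: "transpose B = - B"
  shows "boundary_term_minus N p K A B z w i - boundary_term_plus N p K A B z w i
    = - 1/2 * ((K *v avg N p z i + A *v jump N p z i) \<bullet> jump N p w i
             + (K *v avg N p w i + A *v jump N p w i) \<bullet> jump N p z i)"
proof -
  have "boundary_term_minus N p K A B z w i - boundary_term_plus N p K A B z w i
      = - (flux N p K A B z w i \<bullet> jump N p w i)
        + 1/2 * ((K *v tr_plus N p z i) \<bullet> tr_plus N p w i - (K *v tr_minus N p z i) \<bullet> tr_minus N p w i)"
    by (simp add: boundary_term_minus_def boundary_term_plus_def jump_def inner_diff_right algebra_simps)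
  also have "\<dots> = - ((K *v avg N p z i + A *v jump N p z i) \<bullet> jump N p w i)
        + 1/2 * ((K *v avg N p z i) \<bullet> jump N p w i - (K *v avg N p w i) \<bullet> jump N p z i)"
    by (simp only: flux_inner_jump[OF B] skew_trace_products[OF K])
  finally show ?thesis
    using symmetric_inner_commute[OF A, of "jump N p w i" "jump N p z i"]
    by (simp add: inner_add_left algebra_simps)
qed

text \<open>
At interface i, R is the contribution to the time derivative of the local energy of the cell to its
left, L that of the cell to its right (with z, w, u the solution and its first two time derivatives).
L - R = F holds by definition; the structure of K, A, B is needed only for L + R = 0.
\<close>

lemma interface_energy_rates:
  fixes N k i :: nat and p :: "nat \<Rightarrow> real" and K A B :: "real^'m^'m"
    and a a' a'' :: "nat \<Rightarrow> nat \<Rightarrow> real^'m"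
  assumes K: "transpose K = - K" and A: "transpose A = A" and B: "transpose B = - B"
  defines "z \<equiv> cellf k a" and "w \<equiv> cellf k a'" and "u \<equiv> cellf k a''"
  defines "R \<equiv> boundary_term_minus N p K A B z w i
      - (1/2 * (flux N p K A B z w i \<bullet> tr_minus N p w i + flux N p K A B w u i \<bullet> tr_minus N p z i)
         + 1/4 * ((B *v jump N p w i) \<bullet> jump N p w i + (B *v jump N p u i) \<bullet> jump N p z i))"
    and "L \<equiv> - boundary_term_plus N p K A B z w i
      + (1/2 * (flux N p K A B z w i \<bullet> tr_plus N p w i + flux N p K A B w u i \<bullet> tr_plus N p z i)
         - 1/4 * ((B *v jump N p w i) \<bullet> jump N p w i + (B *v jump N p u i) \<bullet> jump N p z i))"
  shows "R = - 1/2 * Fint N p k K A B a a' a'' i" and "L = 1/2 * Fint N p k K A B a a' a'' i"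
proof -
  have "L - R = Fint N p k K A B a a' a'' i"
    by (simp add: L_def R_def Fint_def avgK_def boundary_term_minus_def boundary_term_plus_def
        z_def w_def u_def avg_def inner_add_right algebra_simps)
  moreover have "L + R = 0"
  proof -
    have "L + R = boundary_term_minus N p K A B z w i - boundary_term_plus N p K A B z w i
        + 1/2 * (flux N p K A B z w i \<bullet> jump N p w i + flux N p K A B w u i \<bullet> jump N p z i)
        - 1/2 * ((B *v jump N p u i) \<bullet> jump N p z i)"
      unfolding L_def R_def skew_inner_self[OF B] by (simp add: jump_def inner_diff_right algebra_simps)
    then show ?thesis
      by (simp add: boundary_term_minus_diff_plus[OF K A B] flux_inner_jump[OF B] flux_def
          skew_inner_self[OF B] inner_add_left algebra_simps)
  qed
  ultimately show "R = - 1/2 * Fint N p k K A B a a' a'' i" and "L = 1/2 * Fint N p k K A B a a' a'' i"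
    by linarith+
qed

lemma pv_inner_has_integral_by_parts:
  fixes K :: "real^'m^'m"
  assumes "a \<le> b"
  shows "((\<lambda>x. (K *v pvd k u x) \<bullet> pv k v x) has_integral
     (K *v pv k u b) \<bullet> pv k v b - (K *v pv k u a) \<bullet> pv k v a
       - integral {a..b} (\<lambda>x. (K *v pv k u x) \<bullet> pvd k v x)) {a..b}"
proof -
  have "((\<lambda>x. (K *v pv k u x) \<bullet> pvd k v x + (K *v pvd k u x) \<bullet> pv k v x) has_integral
      (K *v pv k u b) \<bullet> pv k v b - (K *v pv k u a) \<bullet> pv k v a) {a..b}"
    using assms
  proof (rule fundamental_theorem_of_calculus)
    show "((\<lambda>x. (K *v pv k u x) \<bullet> pv k v x) has_vector_derivative
        (K *v pv k u x) \<bullet> pvd k v x + (K *v pvd k u x) \<bullet> pv k v x) (at x within {a..b})" for x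
      using has_real_derivative_inner[OF has_vector_derivative_matrix_vector_mult[OF pv_has_vector_derivative]
          pv_has_vector_derivative]
      by (simp add: has_real_derivative_iff_has_vector_derivative)
  qed
  moreover have "(\<lambda>x. (K *v pv k u x) \<bullet> pvd k v x) integrable_on {a..b}"
    by (intro integrable_continuous_interval continuous_intros)
  ultimately show ?thesis
    by (auto dest: has_integral_diff[OF _ integrable_integral])
qed

lemma integral_energy_density_has_real_derivative:
  fixes c c' :: "real \<Rightarrow> nat \<Rightarrow> real^'m" and K :: "real^'m^'m" and S :: "real^'m \<Rightarrow> real"
  assumes S_grad: "\<And>z. (S has_derivative (\<lambda>h. gradS z \<bullet> h)) (at z)"
    and gradS_cont: "continuous_on UNIV gradS"
    and c_deriv: "\<And>s i. s \<in> U \<Longrightarrow> ((\<lambda>s. c s i) has_vector_derivative c' s i) (at s within U)"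
    and c'_cont: "\<And>i. continuous_on U (\<lambda>s. c' s i)"
    and U: "convex U" "t \<in> U"
  shows "((\<lambda>s. integral {a..b} (\<lambda>x. S (pv k (c s) x) - 1/2 * ((K *v pvd k (c s) x) \<bullet> pv k (c s) x)))
     has_real_derivative integral {a..b} (\<lambda>x. gradS (pv k (c t) x) \<bullet> pv k (c' t) x
        - 1/2 * ((K *v pvd k (c' t) x) \<bullet> pv k (c t) x + (K *v pvd k (c t) x) \<bullet> pv k (c' t) x)))
     (at t within U)"
proof -
  define e' where "e' s x = gradS (pv k (c s) x) \<bullet> pv k (c' s) x
      - 1/2 * ((K *v pvd k (c' s) x) \<bullet> pv k (c s) x + (K *v pvd k (c s) x) \<bullet> pv k (c' s) x)" for s x
  have S_cont: "continuous_on UNIV S"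
    using S_grad by (meson continuous_on_eq_continuous_within has_derivative_continuous)
  have c_cont: "continuous_on U (\<lambda>s. c s i)" for i
    using c_deriv by (meson continuous_on_eq_continuous_within has_vector_derivative_continuous)
  have e_deriv: "((\<lambda>s. S (pv k (c s) x) - 1/2 * ((K *v pvd k (c s) x) \<bullet> pv k (c s) x))
      has_real_derivative e' s x) (at s within U)" if "s \<in> U" for s x
  proof -
    have pv': "((\<lambda>s. pv k (c s) x) has_vector_derivative pv k (c' s) x) (at s within U)"
      and pvd': "((\<lambda>s. pvd k (c s) x) has_vector_derivative pvd k (c' s) x) (at s within U)"
      using c_deriv[OF that] by (auto intro: pv_coeffs_has_vector_derivative pvd_coeffs_has_vector_derivative)
    have "((\<lambda>s. S (pv k (c s) x)) has_real_derivative gradS (pv k (c s) x) \<bullet> pv k (c' s) x) (at s within U)"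
      using vector_derivative_diff_chain_within[OF pv' has_derivative_at_withinI[OF S_grad]]
      by (simp add: has_real_derivative_iff_has_vector_derivative o_def)
    moreover have "((\<lambda>s. (K *v pvd k (c s) x) \<bullet> pv k (c s) x) has_real_derivative
        (K *v pvd k (c s) x) \<bullet> pv k (c' s) x + (K *v pvd k (c' s) x) \<bullet> pv k (c s) x) (at s within U)"
      by (rule has_real_derivative_inner[OF has_vector_derivative_matrix_vector_mult[OF pvd'] pv'])
    ultimately show ?thesis
      unfolding e'_def by (auto intro!: derivative_eq_intros)
  qed
  have e_integrable: "(\<lambda>x. S (pv k (c s) x) - 1/2 * ((K *v pvd k (c s) x) \<bullet> pv k (c s) x))
      integrable_on cbox a b" for s
    by (intro integrable_continuous continuous_intros continuous_on_compose2[OF S_cont]) auto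
  have "continuous_on (U \<times> cbox a b) (\<lambda>y. gradS (pv k (c (fst y)) (snd y)))"
    by (intro continuous_on_compose2[OF gradS_cont] continuous_on_pv_coeffs c_cont) auto
  then have e'_cont: "continuous_on (U \<times> cbox a b) (\<lambda>(s, x). e' s x)"
    unfolding e'_def split_beta by (intro continuous_intros c_cont c'_cont)
  show ?thesis
    using leibniz_rule_field_derivative[OF e_deriv e_integrable e'_cont U(2,1)]
    by (simp add: e'_def)
qed

lemma integral_energy_rate_eq_boundary_terms:
  fixes M K :: "real^'m^'m"
  assumes M: "transpose M = - M" and K: "transpose K = - K" and "a \<le> b"
    and gradS_cont: "continuous_on UNIV gradS"
    and tested: "integral {a..b} (\<lambda>x. (M *v pv k w x) \<bullet> pv k w x)
      - integral {a..b} (\<lambda>x. (K *v pv k z x) \<bullet> pvd k w x) + F1 - F0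
      = integral {a..b} (\<lambda>x. gradS (pv k z x) \<bullet> pv k w x)"
  shows "integral {a..b} (\<lambda>x. gradS (pv k z x) \<bullet> pv k w x
        - 1/2 * ((K *v pvd k w x) \<bullet> pv k z x + (K *v pvd k z x) \<bullet> pv k w x))
     = F1 - F0 - 1/2 * ((K *v pv k z b) \<bullet> pv k w b - (K *v pv k z a) \<bullet> pv k w a)"
proof -
  define G where "G = integral {a..b} (\<lambda>x. gradS (pv k z x) \<bullet> pv k w x)"
  define I where "I = integral {a..b} (\<lambda>x. (K *v pv k z x) \<bullet> pvd k w x)"
  have "((\<lambda>x. gradS (pv k z x) \<bullet> pv k w x) has_integral G) {a..b}"
    unfolding G_def
    by (intro integrable_integral integrable_continuous_interval continuous_intros
        continuous_on_compose2[OF gradS_cont]) auto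
  moreover have "((\<lambda>x. (K *v pvd k w x) \<bullet> pv k z x) has_integral - I) {a..b}"
  proof -
    have "((\<lambda>x. - ((K *v pv k z x) \<bullet> pvd k w x)) has_integral - I) {a..b}"
      unfolding I_def
      by (intro has_integral_neg integrable_integral integrable_continuous_interval continuous_intros)
    moreover have "(\<lambda>x. (K *v pvd k w x) \<bullet> pv k z x) = (\<lambda>x. - ((K *v pv k z x) \<bullet> pvd k w x))"
      by (rule ext, rule skew_inner_commute[OF K])
    ultimately show ?thesis by simp
  qed
  moreover have "((\<lambda>x. (K *v pvd k z x) \<bullet> pv k w x) has_integral
      (K *v pv k z b) \<bullet> pv k w b - (K *v pv k z a) \<bullet> pv k w a - I) {a..b}"
    unfolding I_def by (rule pv_inner_has_integral_by_parts[OF \<open>a \<le> b\<close>])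
  ultimately have "((\<lambda>x. gradS (pv k z x) \<bullet> pv k w x
        - 1/2 * ((K *v pvd k w x) \<bullet> pv k z x + (K *v pvd k z x) \<bullet> pv k w x)) has_integral
      G - 1/2 * (- I + ((K *v pv k z b) \<bullet> pv k w b - (K *v pv k z a) \<bullet> pv k w a - I))) {a..b}"
    by (intro has_integral_diff has_integral_mult_right has_integral_add)
  moreover have "G = - I + F1 - F0"
    using tested by (simp add: G_def I_def skew_inner_self[OF M])
  ultimately show ?thesis
    by (simp add: integral_unique algebra_simps)
qed

lemma cell_energy_has_real_derivative:
  fixes M K A B :: "real^'m^'m" and S :: "real^'m \<Rightarrow> real"
    and c c' :: "real \<Rightarrow> nat \<Rightarrow> nat \<Rightarrow> real^'m"
  assumes M: "transpose M = - M" and K: "transpose K = - K"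
    and j: "j < N" and mesh: "p j \<le> p (Suc j)"
    and S_grad: "\<And>z. (S has_derivative (\<lambda>h. gradS z \<bullet> h)) (at z)"
    and gradS_cont: "continuous_on UNIV gradS"
    and c_deriv: "\<And>s j i. s \<in> U \<Longrightarrow> ((\<lambda>s. c s j i) has_vector_derivative c' s j i) (at s within U)"
    and c'_cont: "\<And>j i. continuous_on U (\<lambda>s. c' s j i)"
    and U: "convex U" "t \<in> U"
    and scheme: "dg_scheme N p k M K A B gradS (c t) (c' t)"
  shows "((\<lambda>s. cell_energy k p K S (c s) j) has_real_derivative
      boundary_term_minus N p K A B (cellf k (c t)) (cellf k (c' t)) (Suc j)
    - boundary_term_plus N p K A B (cellf k (c t)) (cellf k (c' t)) j) (at t within U)"
proof -
  have "integral {p j..p (Suc j)} (\<lambda>x. (M *v pv k (c' t j) x) \<bullet> pv k (c' t j) x)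
      - integral {p j..p (Suc j)} (\<lambda>x. (K *v pv k (c t j) x) \<bullet> pvd k (c' t j) x)
      + flux N p K A B (cellf k (c t)) (cellf k (c' t)) (Suc j) \<bullet> tr_minus N p (cellf k (c' t)) (Suc j)
      - flux N p K A B (cellf k (c t)) (cellf k (c' t)) j \<bullet> tr_plus N p (cellf k (c' t)) j
      = integral {p j..p (Suc j)} (\<lambda>x. gradS (pv k (c t j) x) \<bullet> pv k (c' t j) x)"
    using scheme j unfolding dg_scheme_def cellf_def cellfx_def by blast
  note rate = integral_energy_rate_eq_boundary_terms[OF M K mesh gradS_cont this]
  have "((\<lambda>s. integral {p j..p (Suc j)}
        (\<lambda>x. S (pv k (c s j) x) - 1/2 * ((K *v pvd k (c s j) x) \<bullet> pv k (c s j) x)))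
      has_real_derivative integral {p j..p (Suc j)} (\<lambda>x. gradS (pv k (c t j) x) \<bullet> pv k (c' t j) x
        - 1/2 * ((K *v pvd k (c' t j) x) \<bullet> pv k (c t j) x + (K *v pvd k (c t j) x) \<bullet> pv k (c' t j) x)))
      (at t within U)"
    by (rule integral_energy_density_has_real_derivative[OF S_grad gradS_cont c_deriv c'_cont U])
  then show ?thesis
    unfolding rate
    by (simp add: cell_energy_def boundary_term_minus_def boundary_term_plus_def
        tr_minus_Suc[OF j] tr_plus_less[OF j] cellf_def cellfx_def algebra_simps)
qed

lemma local_energy_has_real_derivative:
  fixes M K A B :: "real^'m^'m" and S :: "real^'m \<Rightarrow> real"
    and c c' :: "real \<Rightarrow> nat \<Rightarrow> nat \<Rightarrow> real^'m" and c'' :: "nat \<Rightarrow> nat \<Rightarrow> real^'m"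
  assumes M: "transpose M = - M" and K: "transpose K = - K"
    and A: "transpose A = A" and B: "transpose B = - B"
    and j: "j < N" and mesh: "p j \<le> p (Suc j)"
    and S_grad: "\<And>z. (S has_derivative (\<lambda>h. gradS z \<bullet> h)) (at z)"
    and gradS_cont: "continuous_on UNIV gradS"
    and c_deriv: "\<And>s j i. s \<in> U \<Longrightarrow> ((\<lambda>s. c s j i) has_vector_derivative c' s j i) (at s within U)"
    and c'_cont: "\<And>j i. continuous_on U (\<lambda>s. c' s j i)"
    and c'_deriv: "\<And>j i. ((\<lambda>s. c' s j i) has_vector_derivative c'' j i) (at t within U)"
    and U: "convex U" "t \<in> U"
    and scheme: "dg_scheme N p k M K A B gradS (c t) (c' t)"
  shows "((\<lambda>s. local_energy N p k K A B S (c s) (c' s) j) has_real_derivative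
      1/2 * Fint N p k K A B (c t) (c' t) c'' j - 1/2 * Fint N p k K A B (c t) (c' t) c'' (Suc j))
      (at t within U)"
proof -
  have c_deriv_t: "\<And>j i. ((\<lambda>s. c s j i) has_vector_derivative c' t j i) (at t within U)"
    using c_deriv U(2) .
  \<comment> \<open>Explicit instances: unification alone would produce eta-expanded coefficient functions,
    and the derivatives would no longer match the interface identities syntactically.\<close>
  note flux' = flux_cellf_has_vector_derivative[where u = c and u' = "c' t" and v = c' and v' = c'',
      OF c_deriv_t c'_deriv]
  note tr_minus' = tr_minus_cellf_has_vector_derivative[where u = c and u' = "c' t", OF c_deriv_t]
  note tr_plus' = tr_plus_cellf_has_vector_derivative[where u = c and u' = "c' t", OF c_deriv_t]
  note jump' = jump_cellf_has_vector_derivative[where u = c and u' = "c' t", OF c_deriv_t]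
  note B_jump' = has_vector_derivative_matrix_vector_mult[OF
      jump_cellf_has_vector_derivative[where u = c' and u' = c'', OF c'_deriv]]
  note right_terms' = DERIV_add[OF DERIV_cmult[OF has_real_derivative_inner[OF flux' tr_minus']]
      DERIV_cmult[OF has_real_derivative_inner[OF B_jump' jump']]]
  note left_terms' = DERIV_diff[OF DERIV_cmult[OF has_real_derivative_inner[OF flux' tr_plus']]
      DERIV_cmult[OF has_real_derivative_inner[OF B_jump' jump']]]
  have cell': "((\<lambda>s. cell_energy k p K S (c s) j) has_real_derivative
      boundary_term_minus N p K A B (cellf k (c t)) (cellf k (c' t)) (Suc j)
    - boundary_term_plus N p K A B (cellf k (c t)) (cellf k (c' t)) j) (at t within U)"
    by (rule cell_energy_has_real_derivative[OF M K j mesh S_grad gradS_cont c_deriv c'_cont U scheme])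
  note rates = interface_energy_rates[OF K A B, where N = N and p = p and k = k
      and a = "c t" and a' = "c' t" and a'' = c'']
  note R = rates(1)[where i = "Suc j"] and L = rates(2)[where i = j]
  show ?thesis
    unfolding local_energy_def
    by (rule DERIV_cong[OF DERIV_add[OF DERIV_diff[OF cell' right_terms'] left_terms']])
      (use R L in linarith)
qed

lemma sum_lessThan_Suc_shift_periodic:
  fixes f :: "nat \<Rightarrow> 'a::cancel_comm_monoid_add"
  assumes "f n = f 0"
  shows "(\<Sum>i<n. f (Suc i)) = (\<Sum>i<n. f i)"
  using sum.lessThan_Suc_shift[of f n] sum.lessThan_Suc[of f n] assms by (simp add: add.commute)

lemma total_energy_has_real_derivative_zero:
  fixes M K A B :: "real^'m^'m" and S :: "real^'m \<Rightarrow> real"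
    and c c' :: "real \<Rightarrow> nat \<Rightarrow> nat \<Rightarrow> real^'m"
  assumes M: "transpose M = - M" and K: "transpose K = - K"
    and A: "transpose A = A" and B: "transpose B = - B"
    and mesh: "\<And>j. j < N \<Longrightarrow> p j \<le> p (Suc j)"
    and S_grad: "\<And>z. (S has_derivative (\<lambda>h. gradS z \<bullet> h)) (at z)"
    and gradS_cont: "continuous_on UNIV gradS"
    and c_deriv: "\<And>s j i. s \<in> U \<Longrightarrow> ((\<lambda>s. c s j i) has_vector_derivative c' s j i) (at s within U)"
    and c'_cont: "\<And>j i. continuous_on U (\<lambda>s. c' s j i)"
    and U: "convex U" "t \<in> U"
    and scheme: "dg_scheme N p k M K A B gradS (c t) (c' t)"
  shows "((\<lambda>s. total_energy N p k K A S (c s)) has_real_derivative 0) (at t within U)"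
proof -
  let ?z = "cellf k (c t)" and ?w = "cellf k (c' t)"
  define G where "G i = (K *v avg N p ?z i + A *v jump N p ?z i) \<bullet> jump N p ?w i
      + (K *v avg N p ?w i + A *v jump N p ?w i) \<bullet> jump N p ?z i" for i
  have c_deriv_t: "\<And>j i. ((\<lambda>s. c s j i) has_vector_derivative c' t j i) (at t within U)"
    using c_deriv U(2) .
  have cells: "((\<lambda>s. \<Sum>j<N. cell_energy k p K S (c s) j) has_real_derivative
      (\<Sum>j<N. boundary_term_minus N p K A B ?z ?w (Suc j) - boundary_term_plus N p K A B ?z ?w j))
      (at t within U)"
    by (intro DERIV_sum
        cell_energy_has_real_derivative[OF M K _ mesh S_grad gradS_cont c_deriv c'_cont U scheme])
      simp_all
  have interfaces: "((\<lambda>s. \<Sum>i<N. (K *v avg N p (cellf k (c s)) i + A *v jump N p (cellf k (c s)) i)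
      \<bullet> jump N p (cellf k (c s)) i) has_real_derivative (\<Sum>i<N. G i)) (at t within U)"
    unfolding G_def
    by (intro DERIV_sum has_real_derivative_inner has_vector_derivative_add
        has_vector_derivative_matrix_vector_mult
        avg_cellf_has_vector_derivative[where u = c and u' = "c' t", OF c_deriv_t]
        jump_cellf_has_vector_derivative[where u = c and u' = "c' t", OF c_deriv_t])
  have "(\<Sum>j<N. boundary_term_minus N p K A B ?z ?w (Suc j) - boundary_term_plus N p K A B ?z ?w j)
      + 1/2 * (\<Sum>i<N. G i)
      = (\<Sum>i<N. boundary_term_minus N p K A B ?z ?w i - boundary_term_plus N p K A B ?z ?w i + 1/2 * G i)"
    by (simp add: sum_subtractf sum.distrib sum_distrib_left
        sum_lessThan_Suc_shift_periodic[where f = "boundary_term_minus N p K A B ?z ?w",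
          OF boundary_term_minus_periodic])
  also have "\<dots> = 0"
    by (simp add: boundary_term_minus_diff_plus[OF K A B] G_def)
  finally show ?thesis
    using DERIV_add[OF cells DERIV_cmult[OF interfaces, of "1/2"]] by (simp add: total_energy_def)
qed

theorem theorem3p2:
  fixes N k :: nat and p :: "nat \<Rightarrow> real" and T :: real
    and M K A B :: "real^'m^'m"
    and S :: "real^'m \<Rightarrow> real" and gradS :: "real^'m \<Rightarrow> real^'m"
    and c c' :: "real \<Rightarrow> nat \<Rightarrow> nat \<Rightarrow> real^'m"
  assumes N: "N \<ge> 1"
    and mesh: "\<And>j. j < N \<Longrightarrow> p j < p (Suc j)"
    and T: "T > 0"
    and M_anti: "transpose M = - M"
    and K_anti: "transpose K = - K"
    and A_sym: "transpose A = A"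
    and B_anti: "transpose B = - B"
    and S_grad: "\<And>z. (S has_derivative (\<lambda>h. gradS z \<bullet> h)) (at z)"
    and gradS_cont: "continuous_on UNIV gradS"
    and c_deriv: "\<And>t j i. t \<in> {0..T} \<Longrightarrow>
         ((\<lambda>s. c s j i) has_vector_derivative c' t j i) (at t within {0..T})"
    and c'_cont: "\<And>j i. continuous_on {0..T} (\<lambda>t. c' t j i)"
    and scheme: "\<And>t. t \<in> {0..T} \<Longrightarrow> dg_scheme N p k M K A B gradS (c t) (c' t)"
  shows
    "(\<forall>c'' :: real \<Rightarrow> nat \<Rightarrow> nat \<Rightarrow> real^'m.
        (\<forall>t\<in>{0..T}. \<forall>j i. ((\<lambda>s. c' s j i) has_vector_derivative c'' t j i) (at t within {0..T}))
        \<longrightarrow> (\<forall>t\<in>{0..T}. \<forall>j<N. \<exists>D.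
              ((\<lambda>s. local_energy N p k K A B S (c s) (c' s) j) has_real_derivative D) (at t within {0..T})
              \<and> D + (1/2) * Fint N p k K A B (c t) (c' t) (c'' t) (Suc j)
                  - (1/2) * Fint N p k K A B (c t) (c' t) (c'' t) j = 0))
     \<and> (\<forall>t1\<in>{0..T}. \<forall>t2\<in>{0..T}. total_energy N p k K A S (c t1) = total_energy N p k K A S (c t2))"
proof (intro conjI allI impI ballI)
  fix c'' :: "real \<Rightarrow> nat \<Rightarrow> nat \<Rightarrow> real^'m" and t j
  assume c'_deriv: "\<forall>t\<in>{0..T}. \<forall>j i. ((\<lambda>s. c' s j i) has_vector_derivative c'' t j i) (at t within {0..T})"
    and t: "t \<in> {0..T}" and j: "j < N"
  show "\<exists>D. ((\<lambda>s. local_energy N p k K A B S (c s) (c' s) j) has_real_derivative D) (at t within {0..T})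
      \<and> D + (1/2) * Fint N p k K A B (c t) (c' t) (c'' t) (Suc j)
        - (1/2) * Fint N p k K A B (c t) (c' t) (c'' t) j = 0"
  proof (intro exI conjI)
    show "((\<lambda>s. local_energy N p k K A B S (c s) (c' s) j) has_real_derivative
        1/2 * Fint N p k K A B (c t) (c' t) (c'' t) j - 1/2 * Fint N p k K A B (c t) (c' t) (c'' t) (Suc j))
        (at t within {0..T})"
      using c'_deriv t
      by (intro local_energy_has_real_derivative[OF M_anti K_anti A_sym B_anti j less_imp_le[OF mesh[OF j]]
          S_grad gradS_cont c_deriv c'_cont _ convex_real_interval(5) t scheme[OF t]]) auto
  qed simp
next
  have "((\<lambda>s. total_energy N p k K A S (c s)) has_real_derivative 0) (at t within {0..T})"
    if "t \<in> {0..T}" for t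
    by (rule total_energy_has_real_derivative_zero[OF M_anti K_anti A_sym B_anti less_imp_le[OF mesh]
          S_grad gradS_cont c_deriv c'_cont convex_real_interval(5) that scheme[OF that]])
  then obtain E where "\<forall>t\<in>{0..T}. total_energy N p k K A S (c t) = E"
    using has_field_derivative_zero_constant[OF convex_real_interval(5)] by blast
  then show "total_energy N p k K A S (c t1) = total_energy N p k K A S (c t2)"
    if "t1 \<in> {0..T}" "t2 \<in> {0..T}" for t1 t2
    using that by simp
qed

end
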